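(* Let $n>2$ and $q>0$ be integers such that $n$ is even or $q$ is odd. Then for every prime $p>\max\{n,(q-1)n+1\}$, $$ \sum_{k=0}^{p-1}\frac{(q-\frac{p}{n})_k^n}{(1)_k^n}\equiv0\pmod{p^3}. $$
   Context: $(x)_k$ denotes the Pochhammer symbol: $(x)_0=1$ and $(x)_k=x(x+1)\cdots(x+k-1)$ for $k>0$. A congruence between rational numbers modulo $p^m$ means their difference lies in $p^m\mathbb{Z}_{(p)}$, where $\mathbb{Z}_{(p)}$ is the ring of rationals whose denominators are coprime to $p$. *)

theory Defs
  imports Complex_Main "HOL-Computational_Algebra.Primes"
begin

text \<open>Congruence of rationals modulo p^m: the difference lies in p^m Z_(p),
  i.e. it can be written a/b with integers a, b, where p does not divide b and p^m divides a.\<close>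
definition rat_cong_pow :: "rat \<Rightarrow> rat \<Rightarrow> int \<Rightarrow> nat \<Rightarrow> bool" where
  "rat_cong_pow x y p m \<longleftrightarrow>
     (\<exists>a b :: int. b \<noteq> 0 \<and> \<not> p dvd b \<and> p ^ m dvd a \<and> x - y = of_int a / of_int b)"

end

theory Submission
  imports Defs "HOL-Computational_Algebra.Polynomial"
begin

(*
  Put x = p/n and s = q - 1, so that q - p/n = (1 - x) + s.  Multiplying the sum by the p-adic unit
  (1 - x)_s^n turns it into the sum of ((1 - x)_m / (m - s)!)^n over s <= m < p + s.  The terms with
  m >= p contain the factor p - x and vanish modulo p^n.  For m < p the term equals P(m) F(m)^n, where
  P = (X (X - 1) ... (X - s + 1))^n and F(m) = (1 - x/1) ... (1 - x/m) = (1 - x)_m / m!.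

  Expanding the product modulo p^3 gives F(m)^n = (-1)^m binomial(p - 1, m) + binomial(n, 2) x^2 H(m),
  with H(m) = 1/1^2 + ... + 1/m^2.  The alternating binomial sum kills P because deg P < p - 1, so it
  remains to see that the sum of P(m) H(m) is divisible by p.  Exchanging the summations expresses it
  through the antidifference R of P (R(X + 1) - R(X) = P(X), R(0) = 0) as R(p) H(p - 1) minus the
  sum of R(i)/i^2.  Since n is even or s is even, P is symmetric under X |-> s - 1 - X; hence R is
  odd about s/2, and as P'' vanishes at 0, ..., s - 1, R'' is constant there, which forces the X^2
  coefficient of R to vanish.  What is left are power sums of exponent below p - 1 and the harmonic
  sum 1/1 + ... + 1/(p - 1), all divisible by p.
*)

section \<open>Rationals that are integral at a prime\<close>

definition p_integral :: "nat \<Rightarrow> rat \<Rightarrow> bool" where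
  "p_integral p x \<longleftrightarrow> (\<exists>a b :: int. \<not> int p dvd b \<and> x = of_int a / of_int b)"

definition p_pow_dvd :: "nat \<Rightarrow> nat \<Rightarrow> rat \<Rightarrow> bool" where
  "p_pow_dvd p k x \<longleftrightarrow> (\<exists>y. p_integral p y \<and> x = of_nat p ^ k * y)"

lemma rat_cong_pow_0I:
  assumes "p_pow_dvd p k x"
  shows "rat_cong_pow x 0 (int p) k"
proof -
  obtain a b :: int where b: "\<not> int p dvd b" and x: "x = of_nat p ^ k * (of_int a / of_int b)"
    using assms unfolding p_pow_dvd_def p_integral_def by blast
  have "x - 0 = of_int (int p ^ k * a) / of_int b" using x by simp
  moreover have "b \<noteq> 0" using b by auto
  ultimately show ?thesis
    unfolding rat_cong_pow_def using b by (intro exI[of _ "int p ^ k * a"] exI[of _ b]) simp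
qed

locale prime_localization =
  fixes p :: nat
  assumes prime: "prime p"
begin

lemma p_pos: "p > 0"
  using prime prime_gt_0_nat by blast

lemma not_dvd_of_less: "0 < j \<Longrightarrow> j < p \<Longrightarrow> \<not> p dvd j"
  by (auto dest: dvd_imp_le)

lemma p_integral_of_int [simp]: "p_integral p (of_int a)"
proof -
  have "\<not> int p dvd 1" using prime by (simp add: prime_nat_iff)
  then show ?thesis unfolding p_integral_def by (intro exI[of _ a] exI[of _ 1]) simp
qed

lemma p_integral_of_nat [simp]: "p_integral p (of_nat a)"
  using p_integral_of_int[of "int a"] by simp

lemma p_integral_0 [simp]: "p_integral p 0"
  and p_integral_1 [simp]: "p_integral p 1"
  using p_integral_of_nat[of 0] p_integral_of_nat[of 1] by simp_all

lemma p_integral_divide_of_int: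
  assumes "\<not> int p dvd b"
  shows "p_integral p (of_int a / of_int b)"
  using assms unfolding p_integral_def by blast

lemma p_integral_add_mult:
  assumes "p_integral p x" "p_integral p y"
  shows "p_integral p (x + y) \<and> p_integral p (x * y)"
proof -
  obtain a b c d :: int where ab: "\<not> int p dvd b" "x = of_int a / of_int b"
    and cd: "\<not> int p dvd d" "y = of_int c / of_int d"
    using assms unfolding p_integral_def by blast
  have "b \<noteq> 0" "d \<noteq> 0" using ab cd by auto
  then have "x + y = of_int (a * d + c * b) / of_int (b * d)" "x * y = of_int (a * c) / of_int (b * d)"
    using ab cd by (simp_all add: field_simps)
  moreover have "\<not> int p dvd b * d"
    using ab cd prime by (simp add: prime_dvd_mult_iff)
  ultimately show ?thesis by (metis p_integral_divide_of_int)
qed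

lemma p_integral_add [intro]: "p_integral p x \<Longrightarrow> p_integral p y \<Longrightarrow> p_integral p (x + y)"
  and p_integral_mult [intro]: "p_integral p x \<Longrightarrow> p_integral p y \<Longrightarrow> p_integral p (x * y)"
  using p_integral_add_mult by blast+

lemma p_integral_uminus [intro]: "p_integral p x \<Longrightarrow> p_integral p (- x)"
  using p_integral_mult[of "-1" x] p_integral_of_int[of "-1"] by simp

lemma p_integral_diff [intro]: "p_integral p x \<Longrightarrow> p_integral p y \<Longrightarrow> p_integral p (x - y)"
  using p_integral_add[of x "- y"] by auto

lemma p_integral_sum [intro]: "(\<And>i. i \<in> A \<Longrightarrow> p_integral p (f i)) \<Longrightarrow> p_integral p (sum f A)"
  by (induction A rule: infinite_finite_induct) auto

lemma p_integral_prod [intro]: "(\<And>i. i \<in> A \<Longrightarrow> p_integral p (f i)) \<Longrightarrow> p_integral p (prod f A)"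
  by (induction A rule: infinite_finite_induct) auto

lemma p_integral_power [intro]: "p_integral p x \<Longrightarrow> p_integral p (x ^ k)"
  by (induction k) auto

lemma p_integral_inverse_of_nat [intro]: "\<not> p dvd b \<Longrightarrow> p_integral p (1 / of_nat b)"
  using p_integral_divide_of_int[of "int b" 1] by simp

lemma p_pow_dvdI [intro]: "p_integral p y \<Longrightarrow> p_pow_dvd p k (of_nat p ^ k * y)"
  unfolding p_pow_dvd_def by blast

lemma p_pow_dvd_of_nat_power [intro]: "p_pow_dvd p k (of_nat p ^ k)"
  using p_pow_dvdI[of 1 k] by simp

lemma p_pow_dvd_0 [simp]: "p_pow_dvd p k 0"
  using p_pow_dvdI[of 0 k] by simp

lemma p_pow_dvd_zero_iff: "p_pow_dvd p 0 x \<longleftrightarrow> p_integral p x"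
  unfolding p_pow_dvd_def by simp

lemma p_pow_dvdE:
  assumes "p_pow_dvd p k x"
  obtains y where "p_integral p y" "x = of_nat p ^ k * y"
  using assms unfolding p_pow_dvd_def by blast

lemma p_pow_dvd_add [intro]: "p_pow_dvd p k x \<Longrightarrow> p_pow_dvd p k y \<Longrightarrow> p_pow_dvd p k (x + y)"
  by (elim p_pow_dvdE) (simp add: p_pow_dvdI p_integral_add flip: distrib_left)

lemma p_pow_dvd_mult_right [intro]:
  assumes "p_pow_dvd p k x" "p_integral p y"
  shows "p_pow_dvd p k (x * y)"
proof -
  obtain z where "p_integral p z" "x = of_nat p ^ k * z" using assms(1) by (rule p_pow_dvdE)
  then show ?thesis using p_pow_dvdI[of "z * y" k] p_integral_mult assms(2) by (simp add: mult.assoc)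
qed

lemma p_pow_dvd_mult_left [intro]: "p_integral p y \<Longrightarrow> p_pow_dvd p k x \<Longrightarrow> p_pow_dvd p k (y * x)"
  using p_pow_dvd_mult_right by (simp add: mult.commute)

lemma p_pow_dvd_uminus [intro]: "p_pow_dvd p k x \<Longrightarrow> p_pow_dvd p k (- x)"
  using p_pow_dvd_mult_right[of k x "-1"] p_integral_of_int[of "-1"] by simp

lemma p_pow_dvd_diff [intro]: "p_pow_dvd p k x \<Longrightarrow> p_pow_dvd p k y \<Longrightarrow> p_pow_dvd p k (x - y)"
  using p_pow_dvd_add[of k x "- y"] by auto

lemma p_pow_dvd_sum [intro]: "(\<And>i. i \<in> A \<Longrightarrow> p_pow_dvd p k (f i)) \<Longrightarrow> p_pow_dvd p k (sum f A)"
  by (induction A rule: infinite_finite_induct) auto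

lemma p_pow_dvd_mult [intro]:
  assumes "p_pow_dvd p j x" "p_pow_dvd p k y"
  shows "p_pow_dvd p (j + k) (x * y)"
proof -
  obtain x' y' where "p_integral p x'" "x = of_nat p ^ j * x'" "p_integral p y'" "y = of_nat p ^ k * y'"
    using assms by (metis p_pow_dvdE)
  then show ?thesis using p_pow_dvdI[of "x' * y'" "j + k"] p_integral_mult by (simp add: power_add mult_ac)
qed

lemma p_over_p_dvd:
  assumes "0 < n" "n < p"
  shows "p_pow_dvd p 1 (of_nat p / of_nat n)"
  using p_pow_dvdI[of "1 / of_nat n" 1] p_integral_inverse_of_nat[OF not_dvd_of_less[OF assms]] by simp

lemma p_pow_dvd_mono:
  assumes "j \<le> k" "p_pow_dvd p k x"
  shows "p_pow_dvd p j x"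
proof -
  obtain y where "p_integral p y" "x = of_nat p ^ k * y" using assms(2) by (rule p_pow_dvdE)
  moreover have "(of_nat p ^ k :: rat) = of_nat p ^ j * of_nat p ^ (k - j)"
    using assms(1) by (simp flip: power_add)
  moreover have "p_integral p (of_nat p ^ (k - j) * y)"
    using \<open>p_integral p y\<close> by (intro p_integral_mult p_integral_power p_integral_of_nat)
  ultimately show ?thesis using p_pow_dvdI[of "of_nat p ^ (k - j) * y" j] by (simp add: mult.assoc)
qed

lemma p_pow_dvd_imp_p_integral: "p_pow_dvd p k x \<Longrightarrow> p_integral p x"
  using p_pow_dvd_mono[of 0 k x] p_pow_dvd_zero_iff by simp

lemma p_pow_dvd_power: "p_pow_dvd p 1 x \<Longrightarrow> p_pow_dvd p k (x ^ k)"
proof (induction k)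
  case (Suc k)
  then show ?case using p_pow_dvd_mult[of 1 x k "x ^ k"] by simp
qed (simp add: p_pow_dvd_zero_iff)

end

section \<open>Finite differences and derivatives of polynomials\<close>

lemma power_Suc_diff_binomial:
  "(x + 1) ^ Suc j - x ^ Suc j = (\<Sum>r<Suc j. of_nat (Suc j choose r) * x ^ r :: 'a::comm_ring_1)"
proof -
  have "(x + 1) ^ Suc j = (\<Sum>r\<le>Suc j. of_nat (Suc j choose r) * x ^ r)"
    by (subst binomial_ring) simp
  then show ?thesis by (simp add: lessThan_Suc_atMost[symmetric])
qed

lemma sum_alternating_binomial_power:
  "j < N \<Longrightarrow> (\<Sum>m\<le>N. (-1) ^ m * of_nat (N choose m) * of_nat m ^ j) = (0 :: 'a::comm_ring_1)"
proof (induction N arbitrary: j)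
  case (Suc N)
  show ?case
  proof (cases j)
    case 0
    then show ?thesis using choose_alternating_sum[of "Suc N", where 'a='a] by simp
  next
    case (Suc i)
    have absorb: "of_nat (Suc N choose Suc m) * of_nat (Suc m) = (of_nat (Suc N) * of_nat (N choose m) :: 'a)"
      for m using Suc_times_binomial[of m N] by (metis mult.commute of_nat_mult)
    have "(\<Sum>m\<le>Suc N. (-1) ^ m * of_nat (Suc N choose m) * of_nat m ^ j :: 'a)
        = (\<Sum>m\<le>N. (-1) ^ Suc m * (of_nat (Suc N choose Suc m) * of_nat (Suc m)) * of_nat (Suc m) ^ i)"
      unfolding Suc by (subst sum.atMost_Suc_shift) (simp only: power_Suc mult_ac, simp)
    also have "\<dots> = - of_nat (Suc N) * (\<Sum>m\<le>N. (-1) ^ m * of_nat (N choose m) * (of_nat m + 1) ^ i)"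
      unfolding absorb sum_distrib_left by (rule sum.cong) (simp_all add: algebra_simps)
    also have "(\<Sum>m\<le>N. (-1) ^ m * of_nat (N choose m) * (of_nat m + 1) ^ i :: 'a)
        = (\<Sum>t\<le>i. of_nat (i choose t) * (\<Sum>m\<le>N. (-1) ^ m * of_nat (N choose m) * of_nat m ^ t))"
      by (simp add: binomial_ring sum_distrib_left mult_ac sum.swap[of _ "{..N}"])
    also have "\<dots> = 0"
      using Suc.IH Suc.prems \<open>j = Suc i\<close> by (intro sum.neutral) auto
    finally show ?thesis by simp
  qed
qed simp

lemma sum_alternating_binomial_poly:
  fixes P :: "'a::comm_ring_1 poly"
  assumes "degree P < N"
  shows "(\<Sum>m\<le>N. (-1) ^ m * of_nat (N choose m) * poly P (of_nat m)) = 0"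
proof -
  have "(\<Sum>m\<le>N. (-1) ^ m * of_nat (N choose m) * poly P (of_nat m))
      = (\<Sum>k\<le>degree P. coeff P k * (\<Sum>m\<le>N. (-1) ^ m * of_nat (N choose m) * of_nat m ^ k))"
    by (simp add: poly_altdef sum_distrib_left mult_ac sum.swap[of _ "{..N}"])
  also have "\<dots> = 0"
    using assms by (intro sum.neutral) (auto simp: sum_alternating_binomial_power)
  finally show ?thesis .
qed

lemma pow_dvd_pderiv:
  fixes L A :: "'a::idom poly"
  assumes "L ^ Suc j dvd A"
  shows "L ^ j dvd pderiv A"
proof -
  obtain B where B: "A = L ^ Suc j * B" using assms by (elim dvdE)
  have "pderiv A = L ^ Suc j * pderiv B + B * (smult (of_nat (Suc j)) (L ^ j) * pderiv L)"
    unfolding B pderiv_mult pderiv_power_Suc ..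
  also have "\<dots> = L ^ j * (L * pderiv B + smult (of_nat (Suc j)) (B * pderiv L))"
    by (simp add: algebra_simps)
  finally show ?thesis by simp
qed

lemma poly_periodic_eq_0:
  fixes D :: "'a::{idom,ring_char_0} poly"
  assumes periodic: "\<And>x. poly D (x + 1) = poly D x" and "poly D 0 = 0"
  shows "D = 0"
proof (rule ccontr)
  assume "D \<noteq> 0"
  have "poly D (of_nat k) = 0" for k
  proof (induction k)
    case (Suc k)
    then show ?case using periodic[of "of_nat k"] by (simp add: add.commute)
  qed (simp add: assms)
  then have "range (of_nat :: nat \<Rightarrow> 'a) \<subseteq> {x. poly D x = 0}" by auto
  moreover have "infinite (range (of_nat :: nat \<Rightarrow> 'a))"
    by (intro range_inj_infinite inj_of_nat)
  ultimately show False using poly_roots_finite[OF \<open>D \<noteq> 0\<close>] finite_subset by blast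
qed

lemma antidifference_pderiv:
  fixes R P :: "'a::{idom,ring_char_0} poly"
  assumes "\<And>x. poly R (x + 1) - poly R x = poly P x"
  shows "poly (pderiv R) (x + 1) - poly (pderiv R) x = poly (pderiv P) x"
proof -
  have "poly (pcompose R [:1, 1:] - R) = poly P"
    using assms by (simp add: poly_pcompose add.commute fun_eq_iff)
  then have "P = pcompose R [:1, 1:] - R" by (simp add: poly_eq_poly_eq_iff)
  then have "pderiv P = pcompose (pderiv R) [:1, 1:] - pderiv R"
    by (simp add: pderiv_diff pderiv_pcompose pderiv_pCons)
  then show ?thesis by (simp add: poly_pcompose add.commute)
qed

lemma reflection_pderiv:
  fixes R :: "'a::{idom,ring_char_0} poly"
  assumes "\<And>x. poly R (c - x) = a * poly R x"
  shows "poly (pderiv R) (c - x) = - a * poly (pderiv R) x"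
proof -
  have "poly (pcompose R [:c, -1:]) = poly (smult a R)"
    using assms by (simp add: poly_pcompose fun_eq_iff)
  then have "pcompose R [:c, -1:] = smult a R" by (simp add: poly_eq_poly_eq_iff)
  then have "pcompose (pderiv R) [:c, -1:] = - smult a (pderiv R)"
    using pderiv_pcompose[of R "[:c, -1:]"] by (simp add: pderiv_pCons pderiv_smult)
  then have "poly (pcompose (pderiv R) [:c, -1:]) x = poly (- smult a (pderiv R)) x" by simp
  then show ?thesis by (simp add: poly_pcompose)
qed

lemma antidifference_reflection:
  fixes R P :: "'a::{idom,ring_char_0} poly"
  assumes diff: "\<And>x. poly R (x + 1) - poly R x = poly P x" and "poly R 0 = 0"
    and sym: "\<And>x. poly P (of_nat s - 1 - x) = poly P x"
    and roots: "\<And>k. k < s \<Longrightarrow> poly P (of_nat k) = 0"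
  shows "poly R (of_nat s - x) = - poly R x"
proof -
  have R_roots: "poly R (of_nat k) = 0" if "k \<le> s" for k
    using that
  proof (induction k)
    case (Suc k)
    then show ?case using diff[of "of_nat k"] roots[of k] by (simp add: add.commute)
  qed (simp add: \<open>poly R 0 = 0\<close>)
  define D where "D = R + pcompose R [:of_nat s, -1:]"
  have D: "poly D x = poly R x + poly R (of_nat s - x)" for x
    by (simp add: D_def poly_pcompose)
  have "poly D (x + 1) = poly D x" for x
    using diff[of x] diff[of "of_nat s - x - 1"] sym[of x] by (simp add: D algebra_simps)
  moreover have "poly D 0 = 0"
    using R_roots[of s] \<open>poly R 0 = 0\<close> by (simp add: D)
  ultimately have "D = 0" by (rule poly_periodic_eq_0)
  then show ?thesis using D[of x] by (simp add: eq_neg_iff_add_eq_0 add.commute)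
qed

lemma coeff_2_antidifference_eq_0:
  fixes R P :: "'a::{idom,ring_char_0} poly"
  assumes diff: "\<And>x. poly R (x + 1) - poly R x = poly P x" and "poly R 0 = 0"
    and sym: "\<And>x. poly P (of_nat s - 1 - x) = poly P x"
    and roots: "\<And>k. k < s \<Longrightarrow> poly P (of_nat k) = 0"
    and roots2: "\<And>k. k < s \<Longrightarrow> poly (pderiv (pderiv P)) (of_nat k) = 0"
  shows "coeff R 2 = 0"
proof -
  define R2 where "R2 = pderiv (pderiv R)"
  have R2_diff: "poly R2 (x + 1) - poly R2 x = poly (pderiv (pderiv P)) x" for x
    unfolding R2_def by (intro antidifference_pderiv diff)
  have R2_const: "poly R2 (of_nat k) = poly R2 0" if "k \<le> s" for k
    using that
  proof (induction k)
    case (Suc k)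
    then show ?case using R2_diff[of "of_nat k"] roots2[of k] by (simp add: add.commute)
  qed simp
  have "poly R (of_nat s - x) = - poly R x" for x
    using diff \<open>poly R 0 = 0\<close> sym roots by (rule antidifference_reflection)
  then have "poly (pderiv R) (of_nat s - x) = poly (pderiv R) x" for x
    using reflection_pderiv[of R "of_nat s" "-1"] by simp
  then have "poly R2 (of_nat s - x) = - poly R2 x" for x
    unfolding R2_def using reflection_pderiv[of "pderiv R" "of_nat s" 1] by simp
  from this[of 0] have "poly R2 0 = 0"
    using R2_const[of s] by (simp add: eq_neg_iff_add_eq_0)
  moreover have "poly R2 0 = 2 * coeff R 2"
    by (simp add: R2_def poly_0_coeff_0 coeff_pderiv numeral_2_eq_2)
  ultimately show ?thesis by simp
qed

section \<open>The falling factorial polynomial\<close>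

lemma poly_pochhammer: "poly (pochhammer Q k) x = pochhammer (poly Q x) k"
  by (induction k) (simp_all add: pochhammer_Suc)

lemma degree_pochhammer_le: "degree (pochhammer Q k) \<le> k * degree Q"
proof (induction k)
  case (Suc k)
  have "degree (Q + of_nat k) \<le> degree Q"
    by (rule degree_add_le) (simp_all add: of_nat_poly)
  then show ?case
    using Suc degree_mult_le[of "pochhammer Q k" "Q + of_nat k"] by (simp add: pochhammer_Suc)
qed simp

text \<open>\<^term>\<open>poly (falling_poly s) x\<close> is the falling factorial x (x - 1) ... (x - s + 1).\<close>

definition falling_poly :: "nat \<Rightarrow> 'a::comm_ring_1 poly" where
  "falling_poly s = pochhammer [:1 - of_nat s, 1:] s"

lemma poly_falling_poly: "poly (falling_poly s) x = pochhammer (x - of_nat s + 1) s"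
  by (simp add: falling_poly_def poly_pochhammer algebra_simps)

lemma degree_falling_poly_le: "degree (falling_poly s) \<le> s"
  using degree_pochhammer_le[of "[:1 - of_nat s, 1:]" s] by (simp add: falling_poly_def)

lemma falling_poly_root: "k < s \<Longrightarrow> poly (falling_poly s) (of_nat k) = 0"
  unfolding poly_falling_poly pochhammer_prod
  by (intro prod_zero bexI[of _ "s - 1 - k"]) (auto simp: of_nat_diff)

lemma falling_poly_reflect:
  "poly (falling_poly s) (of_nat s - 1 - x) = (-1) ^ s * poly (falling_poly s) x"
  using pochhammer_minus[of x s] by (simp add: poly_falling_poly)

lemma degree_falling_poly_power_le: "degree (falling_poly s ^ n) \<le> s * n"
  by (rule order.trans[OF degree_power_le mult_le_mono1[OF degree_falling_poly_le]])

lemma falling_poly_power_reflect: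
  "even (s * n) \<Longrightarrow> poly (falling_poly s ^ n) (of_nat s - 1 - x) = poly (falling_poly s ^ n) x"
  by (simp add: falling_poly_reflect power_mult_distrib flip: power_mult)

lemma falling_poly_power_pderiv2_root:
  assumes "k < s" "3 \<le> n"
  shows "poly (pderiv (pderiv (falling_poly s ^ n :: 'a::idom poly))) (of_nat k) = 0"
proof -
  have "[:- of_nat k, 1:] dvd (falling_poly s :: 'a poly)"
    using falling_poly_root[OF assms(1)] by (simp add: poly_eq_0_iff_dvd)
  then have "[:- of_nat k, 1:] ^ 3 dvd (falling_poly s ^ 3 :: 'a poly)" by (rule dvd_power_same)
  moreover have "falling_poly s ^ 3 dvd (falling_poly s ^ n :: 'a poly)"
    using assms(2) by (rule le_imp_power_dvd)
  ultimately have "[:- of_nat k, 1:] ^ Suc (Suc (Suc 0)) dvd (falling_poly s ^ n :: 'a poly)"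
    unfolding numeral_3_eq_3 by (rule dvd_trans)
  then have "[:- of_nat k, 1:] ^ Suc 0 dvd pderiv (pderiv (falling_poly s ^ n :: 'a poly))"
    by (intro pow_dvd_pderiv)
  then show ?thesis by (simp add: poly_eq_0_iff_dvd)
qed

lemma fact_eq_fact_mult_falling_poly:
  assumes "s \<le> m"
  shows "fact m = (fact (m - s) * poly (falling_poly s) (of_nat m) :: 'a::{comm_ring_1,semiring_char_0})"
proof -
  have "(fact m :: 'a) = pochhammer 1 (m - s + s)" using assms by (simp add: pochhammer_fact)
  also have "\<dots> = fact (m - s) * pochhammer (1 + of_nat (m - s)) s"
    by (simp add: pochhammer_product' pochhammer_fact)
  finally show ?thesis using assms by (simp add: poly_falling_poly of_nat_diff algebra_simps)
qed

section \<open>Power sums and harmonic sums modulo p\<close>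

definition p_integral_poly :: "nat \<Rightarrow> rat poly \<Rightarrow> bool" where
  "p_integral_poly p Q \<longleftrightarrow> (\<forall>k. p_integral p (coeff Q k))"

definition harm2 :: "nat \<Rightarrow> rat" where
  "harm2 m = (\<Sum>i=1..m. 1 / of_nat i ^ 2)"

context prime_localization
begin

lemma p_integral_poly_pCons [intro]:
  "p_integral p c \<Longrightarrow> p_integral_poly p Q \<Longrightarrow> p_integral_poly p (pCons c Q)"
  unfolding p_integral_poly_def by (auto simp: coeff_pCons split: nat.split)

lemma p_integral_poly_0 [intro]: "p_integral_poly p 0"
  and p_integral_poly_1 [intro]: "p_integral_poly p 1"
  unfolding p_integral_poly_def by (auto simp: coeff_1)

lemma p_integral_poly_of_nat [intro]: "p_integral_poly p (of_nat k)"
  unfolding of_nat_poly by (intro p_integral_poly_pCons p_integral_poly_0 p_integral_of_nat)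

lemma p_integral_poly_add [intro]:
  "p_integral_poly p A \<Longrightarrow> p_integral_poly p B \<Longrightarrow> p_integral_poly p (A + B)"
  and p_integral_poly_diff [intro]:
  "p_integral_poly p A \<Longrightarrow> p_integral_poly p B \<Longrightarrow> p_integral_poly p (A - B)"
  and p_integral_poly_mult [intro]:
  "p_integral_poly p A \<Longrightarrow> p_integral_poly p B \<Longrightarrow> p_integral_poly p (A * B)"
  and p_integral_poly_smult [intro]:
  "p_integral p c \<Longrightarrow> p_integral_poly p A \<Longrightarrow> p_integral_poly p (smult c A)"
  unfolding p_integral_poly_def coeff_mult by auto

lemma p_integral_poly_monom [intro]: "p_integral p c \<Longrightarrow> p_integral_poly p (monom c k)"
  unfolding p_integral_poly_def by (auto simp: coeff_monom)

lemma p_integral_poly_sum [intro]: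
  "(\<And>i. i \<in> A \<Longrightarrow> p_integral_poly p (f i)) \<Longrightarrow> p_integral_poly p (sum f A)"
  unfolding p_integral_poly_def coeff_sum by auto

lemma p_integral_poly_power [intro]: "p_integral_poly p A \<Longrightarrow> p_integral_poly p (A ^ k)"
  by (induction k) auto

lemma p_integral_poly_pochhammer [intro]:
  "p_integral_poly p A \<Longrightarrow> p_integral_poly p (pochhammer A k)"
  by (induction k) (auto simp: pochhammer_Suc)

lemma p_integral_poly_falling_poly: "p_integral_poly p (falling_poly s)"
  unfolding falling_poly_def by (intro p_integral_poly_pochhammer p_integral_poly_pCons) auto

lemma p_integral_poly_eval [intro]:
  "p_integral_poly p Q \<Longrightarrow> p_integral p x \<Longrightarrow> p_integral p (poly Q x)"
  unfolding poly_altdef p_integral_poly_def by auto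

lemma poly_at_p_p_dvd:
  assumes "p_integral_poly p Q" "poly Q 0 = 0"
  shows "p_pow_dvd p 1 (poly Q (of_nat p))"
proof -
  obtain c Q' where Q: "Q = pCons c Q'" by (rule pCons_cases)
  have "p_integral_poly p Q'"
    using assms(1) unfolding Q p_integral_poly_def by (metis coeff_pCons_Suc)
  then have "p_pow_dvd p 1 (of_nat p * poly Q' (of_nat p))"
    using p_pow_dvdI[of _ 1] p_integral_poly_eval p_integral_of_nat by (metis power_one_right)
  then show ?thesis using assms(2) by (simp add: Q)
qed

lemma antidifference_monom_exists:
  "j < p - 1 \<Longrightarrow> \<exists>F. p_integral_poly p F \<and> degree F \<le> Suc j \<and> poly F 0 = 0 \<and>
     (\<forall>x. poly F (x + 1) - poly F x = x ^ j)"
proof (induction j rule: less_induct)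
  case (less j)
  then obtain Fs where Fs: "\<And>r. r < j \<Longrightarrow> p_integral_poly p (Fs r) \<and> degree (Fs r) \<le> Suc r \<and>
      poly (Fs r) 0 = 0 \<and> (\<forall>x. poly (Fs r) (x + 1) - poly (Fs r) x = x ^ r)"
    by (metis less_trans)
  define G where "G = monom 1 (Suc j) - (\<Sum>r<j. smult (of_nat (Suc j choose r)) (Fs r))"
  define F where "F = smult (1 / of_nat (Suc j)) G"
  have G: "poly G x = x ^ Suc j - (\<Sum>r<j. of_nat (Suc j choose r) * poly (Fs r) x)" for x
    by (simp add: G_def poly_monom poly_sum)
  have "poly G (x + 1) - poly G x = of_nat (Suc j) * x ^ j" for x
  proof -
    have "poly G (x + 1) - poly G x = ((x + 1) ^ Suc j - x ^ Suc j)
        - (\<Sum>r<j. of_nat (Suc j choose r) * (poly (Fs r) (x + 1) - poly (Fs r) x))"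
      by (simp add: G sum_subtractf algebra_simps)
    also have "\<dots> = (\<Sum>r<Suc j. of_nat (Suc j choose r) * x ^ r) - (\<Sum>r<j. of_nat (Suc j choose r) * x ^ r)"
      unfolding power_Suc_diff_binomial using Fs by simp
    finally show ?thesis by simp
  qed
  then have "poly F (x + 1) - poly F x = x ^ j" for x
    unfolding F_def by (simp add: poly_smult flip: diff_divide_distrib del: of_nat_Suc)
  moreover have "poly F 0 = 0" using Fs by (simp add: F_def G)
  moreover have "degree F \<le> Suc j"
    unfolding F_def G_def
    by (intro order.trans[OF degree_smult_le] degree_diff_le degree_monom_le degree_sum_le
        order.trans[OF degree_smult_le]) (use Fs in \<open>force intro: le_SucI\<close>)+
  moreover have "\<not> p dvd Suc j" using less.prems not_dvd_of_less[of "Suc j"] by simp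
  then have "p_integral_poly p F"
    unfolding F_def G_def using Fs p_integral_inverse_of_nat[of "Suc j"]
    by (intro p_integral_poly_smult p_integral_poly_diff p_integral_poly_monom p_integral_poly_sum)
      (auto simp del: of_nat_Suc)
  ultimately show ?case by blast
qed

lemma antidifference_exists:
  assumes "p_integral_poly p P" "degree P < p - 1"
  shows "\<exists>R. p_integral_poly p R \<and> degree R \<le> Suc (degree P) \<and> poly R 0 = 0 \<and>
     (\<forall>x. poly R (x + 1) - poly R x = poly P x)"
proof -
  obtain Fs where Fs: "\<And>r. r \<le> degree P \<Longrightarrow> p_integral_poly p (Fs r) \<and> degree (Fs r) \<le> Suc r \<and>
      poly (Fs r) 0 = 0 \<and> (\<forall>x. poly (Fs r) (x + 1) - poly (Fs r) x = x ^ r)"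
    using antidifference_monom_exists assms(2) by (metis le_less_trans)
  define R where "R = (\<Sum>k\<le>degree P. smult (coeff P k) (Fs k))"
  have "poly R (x + 1) - poly R x = (\<Sum>k\<le>degree P. coeff P k * (poly (Fs k) (x + 1) - poly (Fs k) x))" for x
    by (simp add: R_def poly_sum sum_subtractf algebra_simps)
  also have "\<dots>x = poly P x" for x
    using Fs by (simp add: poly_altdef)
  finally have "poly R (x + 1) - poly R x = poly P x" for x .
  moreover have "poly R 0 = 0" using Fs by (simp add: R_def poly_sum)
  moreover have "degree R \<le> Suc (degree P)"
    unfolding R_def by (intro degree_sum_le order.trans[OF degree_smult_le]) (use Fs in force)+
  moreover have "p_integral_poly p R"
    unfolding R_def using Fs assms(1)
    by (intro p_integral_poly_sum p_integral_poly_smult) (auto simp: p_integral_poly_def)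
  ultimately show ?thesis by blast
qed

lemma power_sum_p_dvd:
  assumes "j < p - 1"
  shows "p_pow_dvd p 1 (\<Sum>m<p. of_nat m ^ j)"
proof -
  obtain F where F: "p_integral_poly p F" "poly F 0 = 0" "\<And>x. poly F (x + 1) - poly F x = x ^ j"
    using antidifference_monom_exists[OF assms] by blast
  have "(\<Sum>m<p. of_nat m ^ j) = (\<Sum>m<p. poly F (of_nat (Suc m)) - poly F (of_nat m))"
    using F(3) by (simp add: add.commute[of 1])
  also have "\<dots> = poly F (of_nat p) - poly F (of_nat 0)"
    by (rule sum_lessThan_telescope)
  finally show ?thesis using poly_at_p_p_dvd[OF F(1,2)] F(2) by simp
qed

lemma harmonic_p_dvd:
  assumes "2 < p"
  shows "p_pow_dvd p 1 (\<Sum>i\<in>{1..<p}. 1 / of_nat i)"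
proof -
  let ?H = "\<Sum>i\<in>{1..<p}. 1 / (of_nat i :: rat)"
  have rev: "?H = (\<Sum>i\<in>{1..<p}. 1 / of_nat (p - i))"
    by (subst sum.atLeastLessThan_rev) simp
  have "2 * ?H = (\<Sum>i\<in>{1..<p}. 1 / of_nat i + 1 / of_nat (p - i))"
    by (subst mult_2, subst (2) rev) (simp add: sum.distrib)
  also have "\<dots> = (\<Sum>i\<in>{1..<p}. of_nat p * (1 / of_nat (i * (p - i))))"
  proof (intro sum.cong refl)
    fix i assume "i \<in> {1..<p}"
    then have "i \<noteq> 0" "p - i \<noteq> 0" "(of_nat (p - i) :: rat) = of_nat p - of_nat i"
      by (auto simp: of_nat_diff)
    then show "1 / of_nat i + 1 / of_nat (p - i) = of_nat p * (1 / (of_nat (i * (p - i)) :: rat))"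
      by (simp add: field_simps)
  qed
  finally have H: "2 * ?H = (\<Sum>i\<in>{1..<p}. of_nat p * (1 / of_nat (i * (p - i))))" .
  have "p_pow_dvd p 1 (of_nat p * (1 / of_nat (i * (p - i))))" if "i \<in> {1..<p}" for i
  proof -
    have "\<not> p dvd i * (p - i)"
      using that prime not_dvd_of_less[of i] not_dvd_of_less[of "p - i"] by (auto simp: prime_dvd_mult_iff)
    then show ?thesis by (metis p_integral_inverse_of_nat p_pow_dvdI power_one_right)
  qed
  then have "p_pow_dvd p 1 (2 * ?H)" unfolding H by (rule p_pow_dvd_sum)
  moreover have "p_integral p (1 / 2)"
    using assms not_dvd_of_less[of 2] p_integral_inverse_of_nat[of 2] by simp
  ultimately have "p_pow_dvd p 1 (2 * ?H * (1 / 2))" by (rule p_pow_dvd_mult_right)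
  then show ?thesis by simp
qed

lemma p_integral_harm2: "m < p \<Longrightarrow> p_integral p (harm2 m)"
  unfolding harm2_def
proof (intro p_integral_sum)
  fix i assume "m < p" "i \<in> {1..m}"
  then have "\<not> p dvd i ^ 2" using prime not_dvd_of_less[of i] by (simp add: prime_dvd_power_iff)
  then show "p_integral p (1 / of_nat i ^ 2)" using p_integral_inverse_of_nat[of "i ^ 2"] by simp
qed

lemma power_div_square_sum_p_dvd:
  assumes "2 < p" "0 < k" "k \<noteq> 2" "k < p"
  shows "p_pow_dvd p 1 (\<Sum>i\<in>{1..<p}. of_nat i ^ k / of_nat i ^ 2)"
proof (cases "k = 1")
  case True
  then show ?thesis using harmonic_p_dvd[OF assms(1)] by (simp add: power2_eq_square)
next
  case False
  then have "2 < k" using assms by simp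
  then have "(\<Sum>i\<in>{1..<p}. of_nat i ^ k / of_nat i ^ 2) = (\<Sum>i\<in>{1..<p}. (of_nat i :: rat) ^ (k - 2))"
    by (intro sum.cong refl) (simp add: power_diff)
  also have "\<dots> = (\<Sum>i<p. of_nat i ^ (k - 2))"
  proof -
    have "{..<p} = insert 0 {1..<p}" using p_pos by auto
    then show ?thesis using \<open>2 < k\<close> by simp
  qed
  finally show ?thesis using power_sum_p_dvd[of "k - 2"] assms by simp
qed

lemma sum_poly_div_square_p_dvd:
  assumes "2 < p" "p_integral_poly p R" "degree R < p" "poly R 0 = 0" "coeff R 2 = 0"
  shows "p_pow_dvd p 1 (\<Sum>i\<in>{1..<p}. poly R (of_nat i) / of_nat i ^ 2)"
proof -
  have "(\<Sum>i\<in>{1..<p}. poly R (of_nat i) / of_nat i ^ 2)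
      = (\<Sum>k\<le>degree R. coeff R k * (\<Sum>i\<in>{1..<p}. of_nat i ^ k / of_nat i ^ 2))"
    unfolding poly_altdef sum_divide_distrib sum_distrib_left by (subst sum.swap) simp
  moreover have "p_pow_dvd p 1 (coeff R k * (\<Sum>i\<in>{1..<p}. of_nat i ^ k / of_nat i ^ 2))"
    if "k \<le> degree R" for k
  proof (cases "k = 0 \<or> k = 2")
    case True
    then show ?thesis using assms(4,5) by (auto simp: poly_0_coeff_0)
  next
    case False
    then show ?thesis
      using that assms(1-3) power_div_square_sum_p_dvd[of k] p_integral_poly_def by auto
  qed
  ultimately show ?thesis by auto
qed

lemma sum_poly_mult_harm2_p_dvd:
  assumes "2 < p" "p_integral_poly p R" "degree R < p" "poly R 0 = 0" "coeff R 2 = 0"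
    and diff: "\<And>x. poly R (x + 1) - poly R x = poly P x"
  shows "p_pow_dvd p 1 (\<Sum>m<p. poly P (of_nat m) * harm2 m)"
proof -
  have tail_sum: "(\<Sum>m\<in>{i..<p}. poly P (of_nat m)) = poly R (of_nat p) - poly R (of_nat i)"
    if "i < p" for i
  proof -
    have "(\<Sum>m\<in>{i..<p}. poly P (of_nat m)) = (\<Sum>m\<in>{i..<p}. poly R (of_nat (Suc m)) - poly R (of_nat m))"
      using diff by (simp add: add.commute[of 1])
    also have "\<dots> = poly R (of_nat p) - poly R (of_nat i)"
      using that by (intro sum_Suc_diff') simp
    finally show ?thesis .
  qed
  have "(\<Sum>m<p. poly P (of_nat m) * harm2 m)
      = (\<Sum>m<p. \<Sum>i\<in>{i \<in> {1..<p}. i \<le> m}. poly P (of_nat m) / of_nat i ^ 2)"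
    unfolding harm2_def sum_distrib_left by (intro sum.cong) auto
  also have "\<dots> = (\<Sum>i\<in>{1..<p}. \<Sum>m\<in>{m \<in> {..<p}. i \<le> m}. poly P (of_nat m) / of_nat i ^ 2)"
    by (rule sum.swap_restrict) simp_all
  also have "\<dots> = (\<Sum>i\<in>{1..<p}. (poly R (of_nat p) - poly R (of_nat i)) / of_nat i ^ 2)"
  proof (intro sum.cong refl)
    fix i assume "i \<in> {1..<p}"
    then have "{m \<in> {..<p}. i \<le> m} = {i..<p}" by auto
    then show "(\<Sum>m\<in>{m \<in> {..<p}. i \<le> m}. poly P (of_nat m) / of_nat i ^ 2)
        = (poly R (of_nat p) - poly R (of_nat i)) / of_nat i ^ 2"
      using tail_sum[of i] \<open>i \<in> {1..<p}\<close> by (simp flip: sum_divide_distrib)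
  qed
  also have "\<dots> = poly R (of_nat p) * harm2 (p - 1) - (\<Sum>i\<in>{1..<p}. poly R (of_nat i) / of_nat i ^ 2)"
  proof -
    have "{1..p - 1} = {1..<p}" using p_pos by auto
    then show ?thesis by (simp add: harm2_def diff_divide_distrib sum_subtractf sum_distrib_left)
  qed
  finally show ?thesis
    using poly_at_p_p_dvd[OF assms(2,4)] p_integral_harm2[of "p - 1"] p_pos
      sum_poly_div_square_p_dvd[OF assms(1-5)] by auto
qed

end

section \<open>The products (1 - x/1) ... (1 - x/m) modulo p^3\<close>

definition poch_quot :: "'a::field_char_0 \<Rightarrow> nat \<Rightarrow> 'a" where
  "poch_quot x m = (\<Prod>i=1..m. 1 - x / of_nat i)"

lemma poch_quot_0 [simp]: "poch_quot x 0 = 1"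
  by (simp add: poch_quot_def)

lemma poch_quot_Suc: "poch_quot x (Suc m) = poch_quot x m * (1 - x / of_nat (Suc m))"
  by (simp add: poch_quot_def)

lemma pochhammer_one_minus: "pochhammer (1 - x) m = fact m * poch_quot x m"
proof (induction m)
  case (Suc m)
  have "of_nat (Suc m) * (1 - x / of_nat (Suc m)) = of_nat (Suc m) - x"
    by (simp add: right_diff_distrib del: of_nat_Suc)
  then have "1 - x + of_nat m = of_nat (Suc m) * (1 - x / of_nat (Suc m))"
    by simp
  then show ?case using Suc by (simp add: pochhammer_Suc poch_quot_Suc mult_ac)
qed simp

lemma poch_quot_of_nat:
  assumes "0 < N"
  shows "poch_quot (of_nat N) m = (-1) ^ m * of_nat (N - 1 choose m)"
proof -
  have "of_nat (N - 1 choose m) = (-1) ^ m * pochhammer (1 - of_nat N) m / (fact m :: 'a)"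
    using assms by (simp add: binomial_gbinomial gbinomial_pochhammer of_nat_diff)
  then show ?thesis by (simp add: pochhammer_one_minus)
qed

context prime_localization
begin

lemma poch_quot_cong_1:
  assumes "p_pow_dvd p 1 x"
  shows "m < p \<Longrightarrow> p_pow_dvd p 1 (poch_quot x m - 1)"
proof (induction m)
  case (Suc m)
  define y where "y = x / of_nat (Suc m)"
  have "p_integral p (1 / of_nat (Suc m))"
    using Suc.prems not_dvd_of_less[of "Suc m"] by (intro p_integral_inverse_of_nat) simp
  then have "p_pow_dvd p 1 y"
    unfolding y_def using p_pow_dvd_mult_right[OF assms] by (metis times_divide_eq_right mult_1_right)
  moreover have "p_integral p (1 - y)"
    using p_pow_dvd_imp_p_integral[OF \<open>p_pow_dvd p 1 y\<close>] by (intro p_integral_diff p_integral_1)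
  moreover have "poch_quot x (Suc m) - 1 = (poch_quot x m - 1) * (1 - y) - y"
    by (simp add: poch_quot_Suc y_def algebra_simps flip: add_divide_distrib)
  ultimately show ?case
    using Suc by (metis Suc_lessD p_pow_dvd_diff p_pow_dvd_mult_right)
qed simp

lemma binomial_cube_cong:
  assumes "p_pow_dvd p 1 t"
  shows "p_pow_dvd p 3 ((1 + t) ^ n - (1 + of_nat n * t + of_nat (n choose 2) * t ^ 2))"
proof -
  define f where "f r = of_nat (n choose r) * t ^ r" for r
  have "(1 + t) ^ n = (\<Sum>r\<le>n. f r)"
    unfolding f_def by (subst add.commute, subst binomial_ring) simp
  also have "\<dots> = (\<Sum>r=0..2 + n. f r)"
    by (rule sum.mono_neutral_left) (auto simp: f_def)
  also have "\<dots> = (\<Sum>r=0..2. f r) + (\<Sum>r=3..2 + n. f r)"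
    using sum.ub_add_nat[of 0 2 f n] by simp
  also have "(\<Sum>r=0..2. f r) = 1 + of_nat n * t + of_nat (n choose 2) * t ^ 2"
    by (simp add: f_def numeral_2_eq_2)
  finally have expand:
    "(1 + t) ^ n - (1 + of_nat n * t + of_nat (n choose 2) * t ^ 2) = (\<Sum>r=3..2 + n. f r)"
    by simp
  have "p_pow_dvd p 3 (f r)" if "3 \<le> r" for r
    unfolding f_def
    using p_pow_dvd_mono[OF that p_pow_dvd_power[OF assms]] by (rule p_pow_dvd_mult_left[rotated]) simp
  then show ?thesis unfolding expand by (intro p_pow_dvd_sum) simp
qed

lemma poch_quot_power_cong_step:
  fixes A V H u :: rat
  assumes x: "p_pow_dvd p 1 x" and u: "p_integral p u" and H: "p_integral p H"
    and V: "p_pow_dvd p 1 (V - 1)"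
    and cong: "p_pow_dvd p 3 (A - V - of_nat (n choose 2) * x ^ 2 * H)"
  shows "p_pow_dvd p 3 (A * (1 - x * u) ^ n - V * (1 - of_nat n * (x * u))
           - of_nat (n choose 2) * x ^ 2 * (H + u ^ 2))"
proof -
  define c :: rat where "c = of_nat (n choose 2)"
  define y where "y = x * u"
  define e where "e = (1 - y) ^ n"
  define B where "B = V + c * x ^ 2 * H"
  have y: "p_pow_dvd p 1 y" unfolding y_def using x u by (rule p_pow_dvd_mult_right)
  have x2: "p_pow_dvd p 2 (x ^ 2)" using x by (rule p_pow_dvd_power)
  have e: "p_pow_dvd p 3 (e - (1 - of_nat n * y + c * y ^ 2))"
    using binomial_cube_cong[of "- y" n] p_pow_dvd_uminus[OF y] by (simp add: e_def c_def)
  have "p_integral p V"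
    using p_integral_add[OF p_pow_dvd_imp_p_integral[OF V] p_integral_1] by simp
  then have B: "p_integral p B"
    using p_pow_dvd_imp_p_integral[OF x2] H unfolding B_def c_def
    by (intro p_integral_add p_integral_mult p_integral_of_nat)
  have "A * e - V * (1 - of_nat n * y) - c * x ^ 2 * (H + u ^ 2)
      = (A - B) * e + B * (e - (1 - of_nat n * y + c * y ^ 2))
        + x ^ 2 * (c * u ^ 2) * (V - 1) + x ^ 2 * (c * H) * (y * (c * y - of_nat n))"
    by (simp add: B_def y_def algebra_simps power2_eq_square)
  moreover have "p_pow_dvd p 3 ((A - B) * e)"
    using cong p_pow_dvd_imp_p_integral[OF y] unfolding B_def c_def e_def diff_diff_eq[symmetric]
    by (intro p_pow_dvd_mult_right p_integral_power p_integral_diff p_integral_1)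
  moreover have "p_pow_dvd p 3 (B * (e - (1 - of_nat n * y + c * y ^ 2)))"
    using B e by (rule p_pow_dvd_mult_left)
  moreover have "p_pow_dvd p (2 + 1) (x ^ 2 * (c * u ^ 2) * (V - 1))"
    using x2 u V unfolding c_def by (intro p_pow_dvd_mult p_pow_dvd_mult_right) auto
  moreover have "p_integral p (c * y - of_nat n)"
    unfolding c_def
    by (rule p_integral_diff[OF p_integral_mult[OF p_integral_of_nat p_pow_dvd_imp_p_integral[OF y]]
          p_integral_of_nat])
  then have "p_pow_dvd p (2 + 1) (x ^ 2 * (c * H) * (y * (c * y - of_nat n)))"
    using x2 H y unfolding c_def
    by (intro p_pow_dvd_mult p_pow_dvd_mult_right p_integral_mult p_integral_of_nat)
  ultimately show ?thesis by (simp add: c_def y_def e_def p_pow_dvd_add)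
qed

lemma poch_quot_power_cong:
  assumes x: "p_pow_dvd p 1 x"
  shows "m < p \<Longrightarrow> p_pow_dvd p 3 (poch_quot x m ^ n - poch_quot (of_nat n * x) m
           - of_nat (n choose 2) * x ^ 2 * harm2 m)"
proof (induction m)
  case (Suc m)
  define u :: rat where "u = 1 / of_nat (Suc m)"
  have "p_integral p u"
    unfolding u_def using Suc.prems not_dvd_of_less[of "Suc m"] by (intro p_integral_inverse_of_nat) simp
  moreover have "p_integral p (harm2 m)" using Suc.prems by (intro p_integral_harm2) simp
  moreover have "p_pow_dvd p 1 (poch_quot (of_nat n * x) m - 1)"
    using Suc.prems x by (intro poch_quot_cong_1 p_pow_dvd_mult_left) simp_all
  ultimately have "p_pow_dvd p 3 (poch_quot x m ^ n * (1 - x * u) ^ n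
      - poch_quot (of_nat n * x) m * (1 - of_nat n * (x * u))
      - of_nat (n choose 2) * x ^ 2 * (harm2 m + u ^ 2))"
    using Suc by (intro poch_quot_power_cong_step x) simp_all
  moreover have "poch_quot x (Suc m) ^ n = poch_quot x m ^ n * (1 - x * u) ^ n"
    "poch_quot (of_nat n * x) (Suc m) = poch_quot (of_nat n * x) m * (1 - of_nat n * (x * u))"
    "harm2 (Suc m) = harm2 m + u ^ 2"
    by (simp_all add: poch_quot_Suc u_def power_mult_distrib harm2_def power_one_over)
  ultimately show ?case by simp
qed (simp add: harm2_def)

lemma sum_poly_poch_quot_power_p_dvd:
  assumes x: "p_pow_dvd p 1 x" and nx: "of_nat n * x = of_nat p"
    and P: "p_integral_poly p P" "degree P < p - 1"
    and harm2_sum: "p_pow_dvd p 1 (\<Sum>m<p. poly P (of_nat m) * harm2 m)"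
  shows "p_pow_dvd p 3 (\<Sum>m<p. poly P (of_nat m) * poch_quot x m ^ n)"
proof -
  define c :: rat where "c = of_nat (n choose 2)"
  define E where "E m = poch_quot x m ^ n - poch_quot (of_nat p) m - c * x ^ 2 * harm2 m" for m
  have "(\<Sum>m<p. poly P (of_nat m) * poch_quot x m ^ n)
      = (\<Sum>m<p. poly P (of_nat m) * E m) + (\<Sum>m<p. poly P (of_nat m) * poch_quot (of_nat p) m)
        + x ^ 2 * c * (\<Sum>m<p. poly P (of_nat m) * harm2 m)"
    by (simp add: E_def algebra_simps sum.distrib sum_distrib_left sum_subtractf)
  also have "(\<Sum>m<p. poly P (of_nat m) * poch_quot (of_nat p) m) = 0"
  proof -
    have "{..<p} = {..p - 1}" using p_pos by auto
    then have "(\<Sum>m<p. poly P (of_nat m) * poch_quot (of_nat p) m)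
        = (\<Sum>m\<le>p - 1. (-1) ^ m * of_nat (p - 1 choose m) * poly P (of_nat m))"
      using p_pos by (simp add: poch_quot_of_nat mult_ac)
    also have "\<dots> = 0" using P(2) by (rule sum_alternating_binomial_poly)
    finally show ?thesis .
  qed
  finally have sum_eq: "(\<Sum>m<p. poly P (of_nat m) * poch_quot x m ^ n)
      = (\<Sum>m<p. poly P (of_nat m) * E m) + x ^ 2 * c * (\<Sum>m<p. poly P (of_nat m) * harm2 m)"
    by simp
  have "p_pow_dvd p 3 (poly P (of_nat m) * E m)" if "m < p" for m
    using P(1) poch_quot_power_cong[OF x that, of n] nx unfolding E_def c_def
    by (intro p_pow_dvd_mult_left p_integral_poly_eval p_integral_of_nat) simp_all
  moreover have "p_pow_dvd p (2 + 1) (x ^ 2 * c * (\<Sum>m<p. poly P (of_nat m) * harm2 m))"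
    using p_pow_dvd_power[OF x, of 2] harm2_sum unfolding c_def
    by (intro p_pow_dvd_mult p_pow_dvd_mult_right p_integral_of_nat)
  ultimately show ?thesis unfolding sum_eq by (intro p_pow_dvd_add p_pow_dvd_sum) auto
qed

lemma sum_falling_power_harm2_p_dvd:
  assumes "2 < n" "2 < p" "s * n + 1 < p" "even (s * n)"
  shows "p_pow_dvd p 1 (\<Sum>m<p. poly (falling_poly s ^ n) (of_nat m) * harm2 m)"
proof -
  define P :: "rat poly" where "P = falling_poly s ^ n"
  have deg: "degree P < p - 1"
    using degree_falling_poly_power_le[of s n, where 'a=rat] assms(3) unfolding P_def by linarith
  have P: "p_integral_poly p P"
    unfolding P_def using p_integral_poly_falling_poly by (rule p_integral_poly_power)
  obtain R where R: "p_integral_poly p R" "degree R \<le> Suc (degree P)" "poly R 0 = 0"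
    and diff: "\<And>x. poly R (x + 1) - poly R x = poly P x"
    using antidifference_exists[OF P deg] by blast
  have "coeff R 2 = 0"
    using diff R(3) unfolding P_def
  proof (rule coeff_2_antidifference_eq_0)
    show "poly (falling_poly s ^ n) (of_nat s - 1 - x) = poly (falling_poly s ^ n) x" for x :: rat
      using assms(4) by (rule falling_poly_power_reflect)
    show "poly (falling_poly s ^ n) (of_nat k) = (0 :: rat)" if "k < s" for k
      using that assms(1) by (simp add: falling_poly_root)
    show "poly (pderiv (pderiv (falling_poly s ^ n))) (of_nat k) = (0 :: rat)" if "k < s" for k
      using that assms(1) by (intro falling_poly_power_pderiv2_root) simp_all
  qed
  moreover have "degree R < p" using R(2) deg by linarith
  ultimately show ?thesis
    unfolding P_def[symmetric] using assms(2) R(1,3) diff by (intro sum_poly_mult_harm2_p_dvd)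
qed

lemma sum_falling_power_poch_quot_p_dvd:
  assumes "2 < n" "n < p" "s * n + 1 < p" "even (s * n)"
  shows "p_pow_dvd p 3 (\<Sum>m<p. poly (falling_poly s ^ n) (of_nat m) * poch_quot (of_nat p / of_nat n) m ^ n)"
proof (rule sum_poly_poch_quot_power_p_dvd)
  show "p_pow_dvd p 1 (of_nat p / of_nat n)" using assms(1,2) by (intro p_over_p_dvd) simp_all
  show "of_nat n * (of_nat p / of_nat n) = (of_nat p :: rat)" using assms(1) by simp
  show "p_integral_poly p (falling_poly s ^ n)"
    using p_integral_poly_falling_poly by (rule p_integral_poly_power)
  show "degree (falling_poly s ^ n :: rat poly) < p - 1"
    using degree_falling_poly_power_le[of s n, where 'a=rat] assms(3) by linarith
  show "p_pow_dvd p 1 (\<Sum>m<p. poly (falling_poly s ^ n) (of_nat m) * harm2 m)"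
    using assms by (intro sum_falling_power_harm2_p_dvd) simp_all
qed

end

section \<open>The Pochhammer sum\<close>

lemma sum_pochhammer_shift:
  fixes z :: "'a::field_char_0"
  shows "(\<Sum>k<N. pochhammer (z + of_nat s) k ^ n / fact k ^ n) * pochhammer z s ^ n
    = (\<Sum>m=s..<N + s. (pochhammer z m / fact (m - s)) ^ n)"
proof -
  have "(\<Sum>k<N. pochhammer (z + of_nat s) k ^ n / fact k ^ n) * pochhammer z s ^ n
      = (\<Sum>k=0..<N. (pochhammer z (k + s) / fact k) ^ n)"
    unfolding sum_distrib_right
    by (simp add: atLeast0LessThan pochhammer_product' power_divide power_mult_distrib
        add.commute[of _ s] mult_ac)
  also have "\<dots> = (\<Sum>m=s..<N + s. (pochhammer z m / fact (m - s)) ^ n)"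
    using sum.shift_bounds_nat_ivl[of "\<lambda>m. (pochhammer z m / fact (m - s)) ^ n" 0 s N] by simp
  finally show ?thesis .
qed

lemma pochhammer_one_minus_div_fact:
  fixes x :: "'a::field_char_0"
  assumes "s \<le> m"
  shows "pochhammer (1 - x) m / fact (m - s) = poly (falling_poly s) (of_nat m) * poch_quot x m"
  using fact_eq_fact_mult_falling_poly[OF assms, where 'a='a] by (simp add: pochhammer_one_minus)

context prime_localization
begin

lemma p_integral_pochhammer: "p_integral p y \<Longrightarrow> p_integral p (pochhammer y k)"
  unfolding pochhammer_prod by (intro p_integral_prod p_integral_add p_integral_of_nat)

lemma inverse_of_nat_diff_p_integral:
  assumes "0 < j" "j < p" "p_pow_dvd p 1 x"
  shows "of_nat j - x \<noteq> 0 \<and> p_integral p (1 / (of_nat j - x))"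
proof -
  obtain y where "p_integral p y" and x: "x = of_nat p * y"
    using assms(3) by (rule p_pow_dvdE) simp
  then obtain a b :: int where b: "\<not> int p dvd b" and y: "y = of_int a / of_int b"
    unfolding p_integral_def by blast
  define d where "d = int j * b - int p * a"
  have ndvd: "\<not> int p dvd d"
  proof
    assume "int p dvd d"
    then have "int p dvd int j * b" unfolding d_def by (metis diff_add_cancel dvd_add dvd_triv_left)
    then show False
      using b prime not_dvd_of_less[OF assms(1,2)] by (simp add: prime_dvd_mult_iff)
  qed
  then have "d \<noteq> 0" by auto
  have "b \<noteq> 0" using b by auto
  then have "of_nat j - x = of_int d / of_int b"
    unfolding x y d_def by (simp add: field_simps)
  then show ?thesis
    using \<open>d \<noteq> 0\<close> \<open>b \<noteq> 0\<close> p_integral_divide_of_int[OF ndvd, of b] by simp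
qed

lemma pochhammer_one_minus_unit:
  assumes "p_pow_dvd p 1 x"
  shows "s < p \<Longrightarrow> pochhammer (1 - x) s \<noteq> 0 \<and> p_integral p (1 / pochhammer (1 - x) s)"
proof (induction s)
  case (Suc s)
  then have A: "pochhammer (1 - x) s \<noteq> 0" "p_integral p (1 / pochhammer (1 - x) s)" by auto
  have B: "of_nat (Suc s) - x \<noteq> 0" "p_integral p (1 / (of_nat (Suc s) - x))"
    using Suc.prems assms inverse_of_nat_diff_p_integral[of "Suc s" x] by simp_all
  have "pochhammer (1 - x) (Suc s) = pochhammer (1 - x) s * (of_nat (Suc s) - x)"
    by (simp add: pochhammer_Suc)
  moreover have "p_integral p (1 / pochhammer (1 - x) s * (1 / (of_nat (Suc s) - x)))"
    using A(2) B(2) by (rule p_integral_mult)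
  ultimately show ?case using A(1) B(1) by simp
qed simp

lemma pochhammer_one_minus_p_dvd:
  assumes x: "p_pow_dvd p 1 x" and "p \<le> m"
  shows "p_pow_dvd p 1 (pochhammer (1 - x) m)"
proof -
  have x': "p_integral p x" using x by (rule p_pow_dvd_imp_p_integral)
  have m: "m = (p - 1) + Suc (m - p)" using assms(2) p_pos by simp
  have "pochhammer (1 - x) m
      = pochhammer (1 - x) (p - 1) * (of_nat p - x) * pochhammer (of_nat p - x + 1) (m - p)"
    by (subst m, simp only: pochhammer_product' pochhammer_rec) (use p_pos in \<open>simp add: of_nat_diff mult_ac\<close>)
  moreover have "p_pow_dvd p 1 (of_nat p - x)"
    using x by (intro p_pow_dvd_diff) (simp_all add: p_pow_dvd_of_nat_power[of 1, simplified])
  moreover have "p_integral p (pochhammer (1 - x) (p - 1))"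
    "p_integral p (pochhammer (of_nat p - x + 1) (m - p))"
    using x' by (simp_all add: p_integral_pochhammer p_integral_add p_integral_diff)
  ultimately show ?thesis by (simp add: p_pow_dvd_mult_left p_pow_dvd_mult_right)
qed

end

lemma sum_pochhammer_div_fact_eq:
  fixes x :: "'a::field_char_0"
  assumes "s \<le> N" "0 < n"
  shows "(\<Sum>m=s..<N. (pochhammer (1 - x) m / fact (m - s)) ^ n)
    = (\<Sum>m<N. poly (falling_poly s ^ n) (of_nat m) * poch_quot x m ^ n)"
proof -
  have "(\<Sum>m<N. poly (falling_poly s ^ n) (of_nat m) * poch_quot x m ^ n)
      = (\<Sum>m=s..<N. poly (falling_poly s ^ n) (of_nat m) * poch_quot x m ^ n)"
    using assms by (intro sum.mono_neutral_right) (auto simp: falling_poly_root)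
  also have "\<dots> = (\<Sum>m=s..<N. (pochhammer (1 - x) m / fact (m - s)) ^ n)"
    by (intro sum.cong refl) (simp add: pochhammer_one_minus_div_fact power_mult_distrib)
  finally show ?thesis ..
qed

lemma sum_pochhammer_power_split:
  fixes x :: "'a::field_char_0"
  assumes "s \<le> N" "0 < n"
  shows "(\<Sum>k<N. pochhammer (1 - x + of_nat s) k ^ n / fact k ^ n) * pochhammer (1 - x) s ^ n
    = (\<Sum>m<N. poly (falling_poly s ^ n) (of_nat m) * poch_quot x m ^ n)
      + (\<Sum>m=N..<N + s. (pochhammer (1 - x) m / fact (m - s)) ^ n)"
  using sum.atLeastLessThan_concat[of s N "N + s" "\<lambda>m. (pochhammer (1 - x) m / fact (m - s)) ^ n",
      symmetric] sum_pochhammer_div_fact_eq[OF assms, of x] assms(1)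
  by (simp add: sum_pochhammer_shift)

context prime_localization
begin

lemma pochhammer_div_fact_power_p_dvd:
  assumes "p_pow_dvd p 1 x" "p \<le> m" "m - s < p"
  shows "p_pow_dvd p n ((pochhammer (1 - x) m / fact (m - s)) ^ n)"
proof -
  have "\<not> p dvd fact (m - s)" using assms(3) prime by (simp add: prime_dvd_fact_iff)
  then have "p_integral p (1 / fact (m - s))"
    using p_integral_inverse_of_nat[of "fact (m - s)"] by simp
  then have "p_pow_dvd p 1 (pochhammer (1 - x) m * (1 / fact (m - s)))"
    using pochhammer_one_minus_p_dvd[OF assms(1,2)] by (rule p_pow_dvd_mult_right[rotated])
  then show ?thesis by (simp add: p_pow_dvd_power)
qed

lemma sum_pochhammer_power_p_cube:
  assumes "2 < n" "n < p" "s * n + 1 < p" "even (s * n)"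
  shows "p_pow_dvd p 3 (\<Sum>k<p. pochhammer (of_nat s + 1 - of_nat p / of_nat n) k ^ n
                                 / pochhammer 1 k ^ n)"
proof -
  define x :: rat where "x = of_nat p / of_nat n"
  define S where "S = (\<Sum>k<p. pochhammer (of_nat s + 1 - x) k ^ n / pochhammer 1 k ^ n)"
  define u where "u = pochhammer (1 - x) s"
  have "s \<le> s * n" using assms(1) by simp
  then have "s < p" using assms(3) by linarith
  have x: "p_pow_dvd p 1 x" unfolding x_def using assms(1,2) by (intro p_over_p_dvd) simp_all
  have Su: "S * u ^ n = (\<Sum>m<p. poly (falling_poly s ^ n) (of_nat m) * poch_quot x m ^ n)
      + (\<Sum>m=p..<p + s. (pochhammer (1 - x) m / fact (m - s)) ^ n)"
    unfolding S_def u_def pochhammer_fact[symmetric]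
    using sum_pochhammer_power_split[of s p n x] \<open>s < p\<close> assms(1) by (simp add: algebra_simps)
  have head: "p_pow_dvd p 3 (\<Sum>m<p. poly (falling_poly s ^ n) (of_nat m) * poch_quot x m ^ n)"
    unfolding x_def using assms by (rule sum_falling_power_poch_quot_p_dvd)
  have tail: "p_pow_dvd p 3 ((pochhammer (1 - x) m / fact (m - s)) ^ n)"
    if "m \<in> {p..<p + s}" for m
  proof -
    have "p \<le> m" "m - s < p" using that p_pos by auto
    then show ?thesis
      using assms(1) pochhammer_div_fact_power_p_dvd[OF x] by (intro p_pow_dvd_mono[of 3 n]) simp_all
  qed
  have Su_p_dvd: "p_pow_dvd p 3 (S * u ^ n)"
    unfolding Su using tail by (intro p_pow_dvd_add[OF head] p_pow_dvd_sum)
  have "u \<noteq> 0" "p_integral p (1 / u)"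
    using pochhammer_one_minus_unit[OF x \<open>s < p\<close>] by (simp_all add: u_def)
  have "p_pow_dvd p 3 (S * u ^ n * (1 / u) ^ n)"
    using Su_p_dvd p_integral_power[OF \<open>p_integral p (1 / u)\<close>] by (rule p_pow_dvd_mult_right)
  moreover have "S * u ^ n * (1 / u) ^ n = S" using \<open>u \<noteq> 0\<close> by (simp add: power_one_over)
  ultimately have "p_pow_dvd p 3 S" by simp
  then show ?thesis by (simp only: S_def x_def)
qed

end

theorem theorem1p1:
  fixes n q p :: nat
  assumes "n > 2" and "q > 0" and "even n \<or> odd q"
    and "prime p" and "p > max n ((q - 1) * n + 1)"
  shows "rat_cong_pow
           (\<Sum>k<p. (pochhammer (of_nat q - of_nat p / of_nat n :: rat) k) ^ n
                    / (pochhammer (1 :: rat) k) ^ n)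
           0 (int p) 3"
proof -
  interpret prime_localization p using assms(4) by unfold_locales
  define s where "s = q - 1"
  have "p_pow_dvd p 3 (\<Sum>k<p. pochhammer (of_nat s + 1 - of_nat p / of_nat n) k ^ n
                                / pochhammer 1 k ^ n)"
    using assms(1-3,5) by (intro sum_pochhammer_power_p_cube) (auto simp: s_def)
  moreover have "of_nat s + 1 = (of_nat q :: rat)" using assms(2) by (simp add: s_def)
  ultimately show ?thesis by (intro rat_cong_pow_0I) simp
qed

end
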